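(* Let $A$ be a deterministic KAT automaton over $(\Sigma,T_0)$ and $\mathfrak{t}:T_0\to\mathsf{BA}(T_1)$. Then $L(\mathsf{compose}_{\mathfrak{t}}(A))=\mathrm{apply}_{\mathfrak{t}}(L(A))$.
   Context: Atoms $\mathsf{At}_T=2^T$; $\mathsf{BA}(T)$ Boolean expressions over $T$; $\alpha\le b$ means $b$ holds under the assignment making exactly the tests in $\alpha$ true. Guarded strings: words in $\mathsf{At}_T(\Sigma\mathsf{At}_T)^*$. Deterministic KAT automaton over $(\Sigma,T)$: $A=(Q,\delta,\iota)$, $Q$ finite, $\delta:Q\times\mathsf{At}_T\to\{\mathsf{accept},\mathsf{reject}\}+\Sigma\times Q$, $\iota:\mathsf{At}_T\to\{\mathsf{accept},\mathsf{reject}\}+\Sigma\times Q$. $L_A(\gamma)$ is the smallest set with $\gamma(\alpha)=\mathsf{accept}\Rightarrow\alpha\in L_A(\gamma)$ and $\gamma(\alpha)=(p,q)$, $w\in L_A(\delta(q,-))\Rightarrow\alpha pw\in L_A(\gamma)$; $L(A)=L_A(\iota)$. $\mathsf{compose}_{\mathfrak{t}}(A)$ for $A=(Q,\delta,\iota)$ over $(\Sigma,T_0)$: for $\beta\in\mathsf{At}_{T_1}$ let $\mathfrak{t}^{-1}(\beta)\in\mathsf{At}_{T_0}$ be the atom with $t\in\mathfrak{t}^{-1}(\beta)$ iff $\beta\le\mathfrak{t}(t)$; then $\mathsf{compose}_{\mathfrak{t}}(A)=(Q,\delta',\iota')$ over $(\Sigma,T_1)$ with $\delta'(q,\beta)=\delta(q,\mathfrak{t}^{-1}(\beta))$,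 $\iota'(\beta)=\iota(\mathfrak{t}^{-1}(\beta))$. $\beta\in\mathsf{At}_{T_1}$ is $\mathfrak{t}$-consistent with $\alpha\in\mathsf{At}_{T_0}$ if for all $t\in T_0$, $\alpha\le t$ iff $\beta\le\mathfrak{t}(t)$. For a guarded language $L$ over $(\Sigma,T_0)$, $\mathrm{apply}_{\mathfrak{t}}(L)$ is the set of guarded strings $\beta_0p_0\beta_1\cdots p_{n-1}\beta_n$ over $(\Sigma,T_1)$ such that some $\alpha_0p_0\alpha_1\cdots p_{n-1}\alpha_n\in L$ has each $\beta_i$ $\mathfrak{t}$-consistent with $\alpha_i$. *)

theory Defs
  imports Main
begin

datatype 't bexp = BTrue | BFalse | BTest 't | BNot "'t bexp"
  | BAnd "'t bexp" "'t bexp" | BOr "'t bexp" "'t bexp"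

fun bvars :: "'t bexp \<Rightarrow> 't set" where
  "bvars BTrue = {}" | "bvars BFalse = {}" | "bvars (BTest t) = {t}"
| "bvars (BNot b) = bvars b" | "bvars (BAnd b c) = bvars b \<union> bvars c"
| "bvars (BOr b c) = bvars b \<union> bvars c"

definition BA :: "'t set \<Rightarrow> 't bexp set" where
  "BA T = {b. bvars b \<subseteq> T}"

(* atoms At_T = 2^T, represented as the set of tests that are true *)
definition atoms :: "'t set \<Rightarrow> 't set set" where
  "atoms T = Pow T"

fun sat :: "'t set \<Rightarrow> 't bexp \<Rightarrow> bool" where
  "sat \<alpha> BTrue = True" | "sat \<alpha> BFalse = False" | "sat \<alpha> (BTest t) = (t \<in> \<alpha>)"
| "sat \<alpha> (BNot b) = (\<not> sat \<alpha> b)" | "sat \<alpha> (BAnd b c) = (sat \<alpha> b \<and> sat \<alpha> c)"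
| "sat \<alpha> (BOr b c) = (sat \<alpha> b \<or> sat \<alpha> c)"

(* guarded string alpha_0 p_0 alpha_1 ... p_{n-1} alpha_n  as (alpha_0, [(p_0,alpha_1),...]) *)
type_synonym ('s, 't) gstring = "'t set \<times> ('s \<times> 't set) list"

definition guarded :: "'t set \<Rightarrow> ('s, 't) gstring \<Rightarrow> bool" where
  "guarded T w \<longleftrightarrow> fst w \<in> atoms T \<and> (\<forall>(p, \<alpha>) \<in> set (snd w). \<alpha> \<in> atoms T)"

datatype ('s, 'q) res = Accept | Reject | Step 's 'q

record ('q, 's, 't) kat_aut =
  states :: "'q set"
  trans :: "'q \<Rightarrow> 't set \<Rightarrow> ('s, 'q) res"
  init :: "'t set \<Rightarrow> ('s, 'q) res"

definition res_ok :: "'q set \<Rightarrow> ('s, 'q) res \<Rightarrow> bool" where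
  "res_ok Q r \<longleftrightarrow> (\<forall>p q. r = Step p q \<longrightarrow> q \<in> Q)"

definition det_kat_aut :: "'s set \<Rightarrow> 't set \<Rightarrow> ('q, 's, 't) kat_aut \<Rightarrow> bool" where
  "det_kat_aut \<Sigma> T A \<longleftrightarrow> finite (states A) \<and>
     (\<forall>\<alpha> \<in> atoms T. res_ok (states A) (init A \<alpha>) \<and>
         (\<forall>p q. init A \<alpha> = Step p q \<longrightarrow> p \<in> \<Sigma>)) \<and>
     (\<forall>q \<in> states A. \<forall>\<alpha> \<in> atoms T. res_ok (states A) (trans A q \<alpha>) \<and>
         (\<forall>p q'. trans A q \<alpha> = Step p q' \<longrightarrow> p \<in> \<Sigma>))"

inductive LA :: "'t set \<Rightarrow> ('q, 's, 't) kat_aut \<Rightarrow> ('t set \<Rightarrow> ('s, 'q) res)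
                      \<Rightarrow> ('s, 't) gstring \<Rightarrow> bool"
  for T A where
  acc: "\<alpha> \<in> atoms T \<Longrightarrow> \<gamma> \<alpha> = Accept \<Longrightarrow> LA T A \<gamma> (\<alpha>, [])"
| step: "\<alpha> \<in> atoms T \<Longrightarrow> \<gamma> \<alpha> = Step p q \<Longrightarrow> LA T A (trans A q) (\<beta>, w)
         \<Longrightarrow> LA T A \<gamma> (\<alpha>, (p, \<beta>) # w)"

definition lang :: "'t set \<Rightarrow> ('q, 's, 't) kat_aut \<Rightarrow> ('s, 't) gstring set" where
  "lang T A = Collect (LA T A (init A))"

definition tinv :: "'t0 set \<Rightarrow> ('t0 \<Rightarrow> 't1 bexp) \<Rightarrow> 't1 set \<Rightarrow> 't0 set" where
  "tinv T0 tt \<beta> = {t \<in> T0. sat \<beta> (tt t)}"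

definition compose :: "'t0 set \<Rightarrow> ('t0 \<Rightarrow> 't1 bexp) \<Rightarrow> ('q, 's, 't0) kat_aut
                        \<Rightarrow> ('q, 's, 't1) kat_aut" where
  "compose T0 tt A = \<lparr> states = states A,
       trans = (\<lambda>q \<beta>. trans A q (tinv T0 tt \<beta>)),
       init = (\<lambda>\<beta>. init A (tinv T0 tt \<beta>)) \<rparr>"

definition consistent :: "'t0 set \<Rightarrow> ('t0 \<Rightarrow> 't1 bexp) \<Rightarrow> 't1 set \<Rightarrow> 't0 set \<Rightarrow> bool" where
  "consistent T0 tt \<beta> \<alpha> \<longleftrightarrow> (\<forall>t \<in> T0. t \<in> \<alpha> \<longleftrightarrow> sat \<beta> (tt t))"

definition apply_t :: "'t0 set \<Rightarrow> 't1 set \<Rightarrow> ('t0 \<Rightarrow> 't1 bexp) \<Rightarrow> ('s, 't0) gstring set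
                       \<Rightarrow> ('s, 't1) gstring set" where
  "apply_t T0 T1 tt L = {(\<beta>0, ws). guarded T1 (\<beta>0, ws) \<and>
     (\<exists>\<alpha>0 vs. (\<alpha>0, vs) \<in> L \<and> length vs = length ws \<and>
        map fst vs = map fst ws \<and> consistent T0 tt \<beta>0 \<alpha>0 \<and>
        (\<forall>i < length ws. consistent T0 tt (snd (ws ! i)) (snd (vs ! i))))}"

end

theory Submission
  imports Defs
begin

text \<open>A word is accepted by the composed automaton exactly when its pointwise translation
  along \<open>tinv\<close> is accepted by the original one; and since an atom \<open>\<alpha>\<close> of \<open>T0\<close> that is
  consistent with \<open>\<beta>\<close> must be \<open>tinv \<beta>\<close>, the image under \<open>apply_t\<close> of a language of guarded
  strings is just the preimage of that language under the same translation.\<close>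

definition tinv_gstring ::
    "'t0 set \<Rightarrow> ('t0 \<Rightarrow> 't1 bexp) \<Rightarrow> ('s, 't1) gstring \<Rightarrow> ('s, 't0) gstring"
  where "tinv_gstring T0 tt w = (tinv T0 tt (fst w), map (\<lambda>(p, \<beta>). (p, tinv T0 tt \<beta>)) (snd w))"

lemma tinv_in_atoms: "tinv T0 tt \<beta> \<in> atoms T0"
  by (auto simp: tinv_def atoms_def)

lemma consistent_tinv: "consistent T0 tt \<beta> (tinv T0 tt \<beta>)"
  by (auto simp: consistent_def tinv_def)

lemma consistent_iff_eq_tinv:
  assumes "\<alpha> \<in> atoms T0"
  shows "consistent T0 tt \<beta> \<alpha> \<longleftrightarrow> \<alpha> = tinv T0 tt \<beta>"
  using assms by (auto simp: consistent_def tinv_def atoms_def)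

lemma guarded_Cons_iff:
  "guarded T (\<alpha>, (p, \<beta>) # w) \<longleftrightarrow> \<alpha> \<in> atoms T \<and> guarded T (\<beta>, w)"
  by (auto simp: guarded_def)

lemma LA_guarded: "LA T A \<gamma> w \<Longrightarrow> guarded T w"
  by (induction rule: LA.induct) (auto simp: guarded_def)

lemma LA_Nil_iff: "LA T A \<gamma> (\<alpha>, []) \<longleftrightarrow> \<alpha> \<in> atoms T \<and> \<gamma> \<alpha> = Accept"
  by (auto elim: LA.cases intro: LA.acc)

lemma LA_Cons_iff:
  "LA T A \<gamma> (\<alpha>, (p, \<beta>) # w) \<longleftrightarrow>
     \<alpha> \<in> atoms T \<and> (\<exists>q. \<gamma> \<alpha> = Step p q \<and> LA T A (trans A q) (\<beta>, w))"
  by (auto elim: LA.cases intro: LA.step)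

lemma LA_compose_iff:
  "LA T1 (compose T0 tt A) (\<lambda>\<beta>. \<gamma> (tinv T0 tt \<beta>)) w \<longleftrightarrow>
     guarded T1 w \<and> LA T0 A \<gamma> (tinv_gstring T0 tt w)"
proof (induction "snd w" arbitrary: w \<gamma>)
  case Nil
  then show ?case
    by (cases w) (auto simp: LA_Nil_iff tinv_gstring_def guarded_def tinv_in_atoms)
next
  case (Cons a v)
  obtain \<alpha> p \<beta> where w: "w = (\<alpha>, (p, \<beta>) # v)"
    using Cons.hyps(2) by (metis prod.collapse)
  have trans_compose: "trans (compose T0 tt A) q = (\<lambda>\<beta>. trans A q (tinv T0 tt \<beta>))" for q
    by (simp add: compose_def)
  show ?case
    using Cons.hyps(1)[of "(\<beta>, v)"]
    by (auto simp: w LA_Cons_iff guarded_Cons_iff trans_compose tinv_gstring_def tinv_in_atoms)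
qed

lemma lang_compose:
  "lang T1 (compose T0 tt A) = {w. guarded T1 w \<and> tinv_gstring T0 tt w \<in> lang T0 A}"
  using LA_compose_iff[of T1 T0 tt A "init A"] by (auto simp: lang_def compose_def)

definition consistent_gstring ::
    "'t0 set \<Rightarrow> ('t0 \<Rightarrow> 't1 bexp) \<Rightarrow> ('s, 't1) gstring \<Rightarrow> ('s, 't0) gstring \<Rightarrow> bool"
  where "consistent_gstring T0 tt w v \<longleftrightarrow>
    length (snd v) = length (snd w) \<and> map fst (snd v) = map fst (snd w) \<and>
    consistent T0 tt (fst w) (fst v) \<and>
    (\<forall>i < length (snd w). consistent T0 tt (snd (snd w ! i)) (snd (snd v ! i)))"

lemma apply_t_altdef:
  "apply_t T0 T1 tt L = {w. guarded T1 w \<and> (\<exists>v \<in> L. consistent_gstring T0 tt w v)}"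
  unfolding apply_t_def consistent_gstring_def by (intro set_eqI) (auto; force)

lemma consistent_gstring_iff_eq_tinv_gstring:
  assumes "guarded T0 v"
  shows "consistent_gstring T0 tt w v \<longleftrightarrow> v = tinv_gstring T0 tt w"
proof
  assume cons: "consistent_gstring T0 tt w v"
  obtain \<alpha>0 vs \<beta>0 ws where v: "v = (\<alpha>0, vs)" and w: "w = (\<beta>0, ws)"
    by (cases v, cases w)
  have len: "length vs = length ws" and fst: "map fst vs = map fst ws"
    using cons by (auto simp: consistent_gstring_def v w)
  have "snd (vs ! i) \<in> atoms T0" if "i < length vs" for i
    using assms nth_mem[OF that] by (auto simp: guarded_def v)
  then have "snd (vs ! i) = tinv T0 tt (snd (ws ! i))" if "i < length vs" for i
    using that cons by (simp add: consistent_iff_eq_tinv consistent_gstring_def v w)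
  moreover have "fst (vs ! i) = fst (ws ! i)" if "i < length vs" for i
    using that len fst by (metis nth_map)
  ultimately have "vs = map (\<lambda>(p, \<beta>). (p, tinv T0 tt \<beta>)) ws"
    using len by (auto intro!: nth_equalityI simp: case_prod_beta prod_eq_iff)
  moreover have "\<alpha>0 = tinv T0 tt \<beta>0"
    using assms cons by (simp add: consistent_iff_eq_tinv consistent_gstring_def guarded_def v w)
  ultimately show "v = tinv_gstring T0 tt w"
    by (simp add: tinv_gstring_def v w)
qed (auto simp: consistent_gstring_def tinv_gstring_def consistent_tinv case_prod_beta)

lemma apply_t_eq_preimage:
  assumes "\<And>v. v \<in> L \<Longrightarrow> guarded T0 v"
  shows "apply_t T0 T1 tt L = {w. guarded T1 w \<and> tinv_gstring T0 tt w \<in> L}"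
  using assms by (auto simp: apply_t_altdef consistent_gstring_iff_eq_tinv_gstring)

theorem proposition6p6:
  fixes \<Sigma> :: "'s set" and T0 :: "'t0 set" and T1 :: "'t1 set"
    and A :: "('q, 's, 't0) kat_aut" and tt :: "'t0 \<Rightarrow> 't1 bexp"
  assumes "finite T0" and "finite T1"
    and "det_kat_aut \<Sigma> T0 A"
    and "\<forall>t \<in> T0. tt t \<in> BA T1"
  shows "lang T1 (compose T0 tt A) = apply_t T0 T1 tt (lang T0 A)"
proof -
  have "\<And>v. v \<in> lang T0 A \<Longrightarrow> guarded T0 v"
    by (auto simp: lang_def intro: LA_guarded)
  then show ?thesis
    by (simp add: lang_compose apply_t_eq_preimage)
qed

end
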